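(* Let $\mathcal{X}=\{x_1,\dots,x_n\}$, $S=\mathbb{R}^{\mathcal{X}}$, and let $p$ be a program, $\sigma\in S$ an environment and $t\in\mathbb{R}_{\geq 0}$ a time instant. Then: (1) $(p,\sigma,t)\to^{\star}(\mathit{skip},\sigma',0)$ if and only if $[\![p]\!](\sigma)=\langle [0,t),h,\sigma'\rangle$ for some $h\colon[0,t)\to\mathbb{R}^{\mathcal{X}}$; (2) $(p,\sigma,t)\to^{\star}(\mathit{stop},\sigma',0)$ if and only if there are $t'\in\mathbb{R}_{\geq0}\cup\{\infty\}$ with $t'>t$ and $h\colon[0,t')\to\mathbb{R}^{\mathcal{X}}$ with $h(t)=\sigma'$ such that either $[\![p]\!](\sigma)=\langle[0,t'),h,\sigma''\rangle$ for some $\sigma''$, or $[\![p]\!](\sigma)=\langle[0,t'),h\rangle$.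
   Context: Syntax. Fix variables $\mathcal{X}=\{x_1,\dots,x_n\}$. Linear terms: $s::= r\mid r\cdot x\mid s_1+s_2$ ($r\in\mathbb{R}$, $x\in\mathcal{X}$). Atomic programs: assignments $x:=s$ and differential statements $x_1'=u_1,\dots,x_n'=u_n\ \mathtt{for}\ s$ (abbreviated $\bar x'=\bar u\ \mathtt{for}\ s$), with $u_i,s$ linear terms. Programs: $p::= a\mid p;q\mid \mathtt{if}\ b\ \mathtt{then}\ p\ \mathtt{else}\ q\mid \mathtt{while}\ b\ \mathtt{do}\ p$, with $a$ atomic and $b$ an element of the free Boolean algebra generated by atoms $s_1\le s_2$, $s_1\ge s_2$. An environment is $\sigma\colon\mathcal{X}\to\mathbb{R}$; $s\sigma$, $b\sigma\in\{\top,\bot\}$ denote evaluation; $\sigma\triangledown[\bar v/\bar x]$ is $\sigma$ updated so that $x_i\mapsto v_i$. $\phi_\sigma\colon[0,\infty)\to\mathbb{R}^n$ denotes the solution of the linear ODE system $\bar x'=\bar u$ with initial value $(\sigma(x_1),\dots,\sigma(x_n))$. Small-step semantics: a relation $\to$ on triples $(p,\sigma,t)$ where $p$ is a program or one of the symbols $\mathit{skip},\mathit{stop}$, $\sigma$ an environment, $t\in\mathbb{R}_{\ge0}$, given by the rules: $(x:=s,\sigma,t)\to(\mathit{skip},\sigma\triangledown[s\sigma/x],t)$; $(\bar x'=\bar u\ \mathtt{for}\ s,\sigma,t)\to(\mathit{stop},\sigma\triangledown[\phi_\sigma(t)/\bar x],0)$ if $t<s\sigma$; $(\bar x'=\bar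 u\ \mathtt{for}\ s,\sigma,t)\to(\mathit{skip},\sigma\triangledown[\phi_\sigma(s\sigma)/\bar x],t-s\sigma)$ if $t\ge s\sigma$; $(\mathtt{if}\ b\ \mathtt{then}\ p\ \mathtt{else}\ q,\sigma,t)\to(p,\sigma,t)$ if $b\sigma=\top$ and $\to(q,\sigma,t)$ if $b\sigma=\bot$; $(\mathtt{while}\ b\ \mathtt{do}\ p,\sigma,t)\to(p;\mathtt{while}\ b\ \mathtt{do}\ p,\sigma,t)$ if $b\sigma=\top$ and $\to(\mathit{skip},\sigma,t)$ if $b\sigma=\bot$; if $(p,\sigma,t)\to(\mathit{stop},\sigma',t')$ then $(p;q,\sigma,t)\to(\mathit{stop},\sigma',t')$; if $(p,\sigma,t)\to(\mathit{skip},\sigma',t')$ then $(p;q,\sigma,t)\to(q,\sigma',t')$; if $(p,\sigma,t)\to(p',\sigma',t')$ with $p'\notin\{\mathit{skip},\mathit{stop}\}$ then $(p;q,\sigma,t)\to(p';q,\sigma',t')$. $\to^{\star}$ is the transitive closure of $\to$. Denotational semantics. For a set $S$, let $H_SX=\sum_{d\in\mathbb{R}_{\ge0}} S^{[0,d)}\times X\ \cup\ \sum_{I} S^{I}$, where in the second summand $I$ ranges over intervals $[0,d]$ ($d\in\mathbb{R}_{\ge0}$) and $[0,d)$ ($d\in\mathbb{R}_{\ge0}\cup\{\infty\}$); elements are written $\langle I,e,x\rangle$ and $\langle I,e\rangle$ with $e\colon I\to S$. Concatenation: $\langle[0,d_1),e_1\rangle\frown\langle J,e_2\rangle=\langle J',\lambda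 t.\ \text{if } t<d_1 \text{ then } e_1(t)\text{ else } e_2(t-d_1)\rangle$ with $J'=[0,d_1+d_2)$ if $J=[0,d_2)$ and $J'=[0,d_1+d_2]$ if $J=[0,d_2]$. Unit $\eta(x)=\langle\emptyset,!,x\rangle$. Kleisli lifting of $f\colon X\to H_SY$: $f^\star\langle I,e,x\rangle=\langle (I,e)\frown(J,e'),y\rangle$ if $f(x)=\langle J,e',y\rangle$; $f^\star\langle I,e,x\rangle=(I,e)\frown(J,e')$ if $f(x)=\langle J,e'\rangle$; $f^\star\langle I,e\rangle=\langle I,e\rangle$. For $g\colon X\to Y$, $H_S g=(\eta\cdot g)^\star$. Order on $H_SY$: $a\sqsubseteq b$ iff $a=b$, or $a=\langle I,e\rangle$ and $b$ is $\langle I',e'\rangle$ or $\langle I',e',y\rangle$ with $I\subseteq I'$ and $e=e'|_I$; functions are ordered pointwise. For $f\colon X\to H_S(Y\uplus X)$, $f^\dagger\colon X\to H_SY$ is the least fixpoint of $g\mapsto[\eta,g]^\star\cdot f$. Take $S=\mathbb{R}^{\mathcal{X}}$ and define $[\![p]\!]\colon S\to H_SS$: $[\![x:=s]\!](\sigma)=\eta(\sigma\triangledown[s\sigma/x])$; $[\![\bar x'=\bar u\ \mathtt{for}\ s]\!](\sigma)=\langle[0,s\sigma),\lambda t.\,\sigma\triangledown[\phi_\sigma(t)/\bar x],\sigma\triangledown[\phi_\sigma(s\sigma)/\bar x]\rangle$; $[\![p;q]\!](\sigma)=[\![q]\!]^\star([\![p]\!](\sigma))$; $[\![\mathtt{if}\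 b\ \mathtt{then}\ p\ \mathtt{else}\ q]\!](\sigma)$ is $[\![p]\!](\sigma)$ if $b\sigma=\top$ and $[\![q]\!](\sigma)$ otherwise; $[\![\mathtt{while}\ b\ \mathtt{do}\ p]\!](\sigma)=\big(\lambda\sigma.\ \text{if } b\sigma=\top \text{ then } (H_S\mathsf{inr})([\![p]\!](\sigma)) \text{ else } \eta(\mathsf{inl}\,\sigma)\big)^\dagger(\sigma)$. *)

theory Defs
  imports "HOL-Analysis.Analysis"
begin

text \<open>Variables are the elements of a finite type 'v; environments are vectors in real^'v.\<close>

datatype 'v lterm = LConst real | LVar real 'v | LPlus "'v lterm" "'v lterm"

primrec leval :: "'v lterm \<Rightarrow> real^'v \<Rightarrow> real" where
  "leval (LConst r) \<sigma> = r"
| "leval (LVar r x) \<sigma> = r * (\<sigma> $ x)"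
| "leval (LPlus s1 s2) \<sigma> = leval s1 \<sigma> + leval s2 \<sigma>"

datatype 'v bexp = BLe "'v lterm" "'v lterm" | BGe "'v lterm" "'v lterm"
  | BTrue | BFalse | BNot "'v bexp" | BAnd "'v bexp" "'v bexp" | BOr "'v bexp" "'v bexp"

primrec bval :: "'v bexp \<Rightarrow> real^'v \<Rightarrow> bool" where
  "bval (BLe s1 s2) \<sigma> = (leval s1 \<sigma> \<le> leval s2 \<sigma>)"
| "bval (BGe s1 s2) \<sigma> = (leval s1 \<sigma> \<ge> leval s2 \<sigma>)"
| "bval BTrue \<sigma> = True"
| "bval BFalse \<sigma> = False"
| "bval (BNot b) \<sigma> = (\<not> bval b \<sigma>)"
| "bval (BAnd b1 b2) \<sigma> = (bval b1 \<sigma> \<and> bval b2 \<sigma>)"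
| "bval (BOr b1 b2) \<sigma> = (bval b1 \<sigma> \<or> bval b2 \<sigma>)"

text \<open>Programs. ODE u s is the differential statement x_1'=u x_1, ..., x_n'=u x_n for s.\<close>
datatype 'v prog = Assign 'v "'v lterm" | ODE "'v \<Rightarrow> 'v lterm" "'v lterm"
  | Seq "'v prog" "'v prog" | If "'v bexp" "'v prog" "'v prog" | While "'v bexp" "'v prog"

definition upd :: "real^'v \<Rightarrow> 'v \<Rightarrow> real \<Rightarrow> real^'v" where
  "upd \<sigma> x v = (\<chi> y. if y = x then v else \<sigma> $ y)"

text \<open>The solution phi_sigma : [0,inf) -> R^n of the linear ODE x' = u(x), x(0) = sigma
 (extended by the constant sigma to negative times, for definiteness).\<close>
definition ode_sol :: "('v::finite \<Rightarrow> 'v lterm) \<Rightarrow> real^'v \<Rightarrow> real \<Rightarrow> real^'v" where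
  "ode_sol u \<sigma> = (THE \<phi>. \<phi> 0 = \<sigma>
      \<and> (\<forall>t\<ge>0. (\<phi> has_vector_derivative (\<chi> i. leval (u i) (\<phi> t))) (at t within {0..}))
      \<and> (\<forall>t<0. \<phi> t = \<sigma>))"

text \<open>Duration of a differential statement (convention: negative values are read as 0).\<close>
definition dur :: "'v lterm \<Rightarrow> real^'v \<Rightarrow> real" where
  "dur s \<sigma> = max 0 (leval s \<sigma>)"

datatype 'v cmd = Prog "'v prog" | Skip | Stop

inductive step :: "'v::finite cmd \<times> (real^'v) \<times> real \<Rightarrow> 'v cmd \<times> (real^'v) \<times> real \<Rightarrow> bool" where
  assign: "step (Prog (Assign x s), \<sigma>, t) (Skip, upd \<sigma> x (leval s \<sigma>), t)"
| ode_stop: "t < dur s \<sigma> \<Longrightarrow> step (Prog (ODE u s), \<sigma>, t) (Stop, ode_sol u \<sigma> t, 0)"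
| ode_skip: "t \<ge> dur s \<sigma> \<Longrightarrow> step (Prog (ODE u s), \<sigma>, t) (Skip, ode_sol u \<sigma> (dur s \<sigma>), t - dur s \<sigma>)"
| if_true: "bval b \<sigma> \<Longrightarrow> step (Prog (If b p q), \<sigma>, t) (Prog p, \<sigma>, t)"
| if_false: "\<not> bval b \<sigma> \<Longrightarrow> step (Prog (If b p q), \<sigma>, t) (Prog q, \<sigma>, t)"
| while_true: "bval b \<sigma> \<Longrightarrow> step (Prog (While b p), \<sigma>, t) (Prog (Seq p (While b p)), \<sigma>, t)"
| while_false: "\<not> bval b \<sigma> \<Longrightarrow> step (Prog (While b p), \<sigma>, t) (Skip, \<sigma>, t)"
| seq_stop: "step (Prog p, \<sigma>, t) (Stop, \<sigma>', t') \<Longrightarrow> step (Prog (Seq p q), \<sigma>, t) (Stop, \<sigma>', t')"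
| seq_skip: "step (Prog p, \<sigma>, t) (Skip, \<sigma>', t') \<Longrightarrow> step (Prog (Seq p q), \<sigma>, t) (Prog q, \<sigma>', t')"
| seq_prog: "step (Prog p, \<sigma>, t) (Prog p', \<sigma>', t') \<Longrightarrow> step (Prog (Seq p q), \<sigma>, t) (Prog (Seq p' q), \<sigma>', t')"

text \<open>Conv d e x is <[0,d), e, x> (with dom e = [0,d)); Div e is <I, e> where I = dom e
  is an interval [0,d] or [0,d). Trajectories are partial maps whose domain is the interval.\<close>
datatype ('s, 'a) H = Conv real "real \<Rightarrow> 's option" 'a | Div "real \<Rightarrow> 's option"

definition cat :: "real \<Rightarrow> (real \<Rightarrow> 's option) \<Rightarrow> (real \<Rightarrow> 's option) \<Rightarrow> (real \<Rightarrow> 's option)" where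
  "cat d e1 e2 = (\<lambda>t. if t < d then e1 t else e2 (t - d))"

definition eta :: "'a \<Rightarrow> ('s, 'a) H" where
  "eta x = Conv 0 Map.empty x"

fun kl :: "('a \<Rightarrow> ('s, 'b) H) \<Rightarrow> ('s, 'a) H \<Rightarrow> ('s, 'b) H" where
  "kl f (Conv d e x) = (case f x of
       Conv d' e' y \<Rightarrow> Conv (d + d') (cat d e e') y
     | Div e' \<Rightarrow> Div (cat d e e'))"
| "kl f (Div e) = Div e"

definition hmap :: "('a \<Rightarrow> 'b) \<Rightarrow> ('s, 'a) H \<Rightarrow> ('s, 'b) H" where
  "hmap g = kl (eta \<circ> g)"

definition le_H :: "('s, 'a) H \<Rightarrow> ('s, 'a) H \<Rightarrow> bool" where
  "le_H a b \<longleftrightarrow> a = b \<or> (\<exists>e. a = Div e \<and>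
      ((\<exists>e'. b = Div e' \<and> e \<subseteq>\<^sub>m e') \<or> (\<exists>d e' y. b = Conv d e' y \<and> e \<subseteq>\<^sub>m e')))"

text \<open>f^dagger: least fixpoint (pointwise order) of g \<mapsto> [eta, g]^* \<circ> f.\<close>
definition dagger :: "('x \<Rightarrow> ('s, 'y + 'x) H) \<Rightarrow> 'x \<Rightarrow> ('s, 'y) H" where
  "dagger f = (THE g. g = (\<lambda>x. kl (case_sum eta g) (f x))
      \<and> (\<forall>g'. g' = (\<lambda>x. kl (case_sum eta g') (f x)) \<longrightarrow> (\<forall>x. le_H (g x) (g' x))))"

primrec sem :: "'v::finite prog \<Rightarrow> real^'v \<Rightarrow> (real^'v, real^'v) H" where
  "sem (Assign x s) \<sigma> = eta (upd \<sigma> x (leval s \<sigma>))"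
| "sem (ODE u s) \<sigma> = Conv (dur s \<sigma>)
      (\<lambda>t. if 0 \<le> t \<and> t < dur s \<sigma> then Some (ode_sol u \<sigma> t) else None)
      (ode_sol u \<sigma> (dur s \<sigma>))"
| "sem (Seq p q) \<sigma> = kl (sem q) (sem p \<sigma>)"
| "sem (If b p q) \<sigma> = (if bval b \<sigma> then sem p \<sigma> else sem q \<sigma>)"
| "sem (While b p) \<sigma> = dagger (\<lambda>\<sigma>. if bval b \<sigma> then hmap Inr (sem p \<sigma>) else eta (Inl \<sigma>)) \<sigma>"

end

theory Submission
  imports Defs
begin

(* Soundness is an invariant of runs (sem_agrees): a configuration reached from (p, \<sigma>, t) after
   time d is either an intermediate program whose denotation, delayed by d, is sem p \<sigma>, or a
   final configuration whose state can be read off sem p \<sigma>. Completeness goes by induction on p: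
   every converging value and every point of the trajectory of sem p \<sigma> is reached by a run.
   For loops the dagger is the limit of its Kleene chain, which either stabilises at a converging
   value or is the union of the divergent trajectories of the stages; each stage is realized by
   induction on the stage, hence so is the limit. Denotations are well formed, i.e. trajectories
   are defined on intervals [0, D) with D \<le> \<infinity>; this gives the shape of h in the theorem. *)

definition traj :: "('s, 'a) H \<Rightarrow> real \<Rightarrow> 's option" where
  "traj a = (case a of Conv d e y \<Rightarrow> e | Div e \<Rightarrow> e)"

definition is_Conv :: "('s, 'a) H \<Rightarrow> bool" where
  "is_Conv a = (case a of Conv d e y \<Rightarrow> True | Div e \<Rightarrow> False)"

definition prepend :: "real \<Rightarrow> (real \<Rightarrow> 's option) \<Rightarrow> ('s, 'a) H \<Rightarrow> ('s, 'a) H" where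
  "prepend d e a = (case a of
       Conv d' e' y \<Rightarrow> Conv (d + d') (cat d e e') y
     | Div e' \<Rightarrow> Div (cat d e e'))"

lemma traj_simps [simp]: "traj (Conv d e y) = e" "traj (Div e) = e"
  by (simp_all add: traj_def)

lemma is_Conv_simps [simp]: "is_Conv (Conv d e y)" "\<not> is_Conv (Div e)"
  by (simp_all add: is_Conv_def)

lemma prepend_simps [simp]:
  "prepend d e (Conv d' e' y) = Conv (d + d') (cat d e e') y"
  "prepend d e (Div e') = Div (cat d e e')"
  by (simp_all add: prepend_def)

lemma not_is_Conv_eq_Div: "\<not> is_Conv a \<Longrightarrow> a = Div (traj a)"
  by (cases a) auto

lemma kl_Conv [simp]: "kl f (Conv d e x) = prepend d e (f x)"
  by (simp add: prepend_def split: H.split)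

declare kl.simps(1) [simp del]

lemma traj_prepend: "traj (prepend d e a) = cat d e (traj a)"
  by (cases a) auto

lemma cat_cat: "0 \<le> d' \<Longrightarrow> cat d e (cat d' e' e'') = cat (d + d') (cat d e e') e''"
  by (auto simp: cat_def fun_eq_iff algebra_simps)

lemma prepend_prepend:
  "0 \<le> d' \<Longrightarrow> prepend d e (prepend d' e' a) = prepend (d + d') (cat d e e') a"
  by (cases a) (auto simp: cat_cat add.assoc)

lemma ex_prepend_0: "\<exists>e. a = prepend 0 e a"
  by (rule exI[of _ "traj a"]) (cases a, auto simp: cat_def)

lemma prepend_cat_same: "prepend d (cat d e e') a = prepend d e a"
  by (cases a) (auto simp: cat_def fun_eq_iff)

lemma map_leI: "(\<And>t s. m t = Some s \<Longrightarrow> m' t = Some s) \<Longrightarrow> m \<subseteq>\<^sub>m m'"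
  by (auto simp: map_le_def)

lemma map_le_SomeD: "m \<subseteq>\<^sub>m m' \<Longrightarrow> m t = Some s \<Longrightarrow> m' t = Some s"
  by (auto simp: map_le_def dom_def)

lemma cat_map_le_cat: "e1 \<subseteq>\<^sub>m e2 \<Longrightarrow> cat d e e1 \<subseteq>\<^sub>m cat d e e2"
  by (auto simp: map_le_def cat_def dom_def)

lemma le_H_refl [simp]: "le_H a a"
  by (simp add: le_H_def)

lemma le_H_Conv: "le_H (Conv d e y) b \<longleftrightarrow> b = Conv d e y"
  by (auto simp: le_H_def)

lemma le_H_Div: "le_H (Div e) b \<longleftrightarrow> e \<subseteq>\<^sub>m traj b"
  by (cases b) (auto simp: le_H_def)

lemma le_H_traj: "le_H a b \<Longrightarrow> traj a \<subseteq>\<^sub>m traj b"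
  by (cases a) (auto simp: le_H_Div le_H_Conv)

lemma le_H_trans: "le_H a b \<Longrightarrow> le_H b c \<Longrightarrow> le_H a c"
  by (cases a; cases b) (auto simp: le_H_Div le_H_Conv dest: le_H_traj intro: map_le_trans)

lemma le_H_antisym: "le_H a b \<Longrightarrow> le_H b a \<Longrightarrow> a = b"
  by (cases a; cases b) (auto simp: le_H_Div le_H_Conv intro: map_le_antisym)

lemma prepend_mono: "le_H a b \<Longrightarrow> le_H (prepend d e a) (prepend d e b)"
  by (cases a) (auto simp: le_H_Div le_H_Conv traj_prepend cat_map_le_cat)

lemma kl_mono: "(\<And>y. le_H (f y) (g y)) \<Longrightarrow> le_H (kl f a) (kl g a)"
  by (cases a) (auto simp: prepend_mono)

section \<open>The dagger as the limit of the Kleene chain\<close>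

definition dagger_fun :: "('x \<Rightarrow> ('s, 'y + 'x) H) \<Rightarrow> ('x \<Rightarrow> ('s, 'y) H) \<Rightarrow> 'x \<Rightarrow> ('s, 'y) H" where
  "dagger_fun f g = (\<lambda>x. kl (case_sum eta g) (f x))"

definition dagger_approx :: "('x \<Rightarrow> ('s, 'y + 'x) H) \<Rightarrow> nat \<Rightarrow> 'x \<Rightarrow> ('s, 'y) H" where
  "dagger_approx f n = (dagger_fun f ^^ n) (\<lambda>x. Div Map.empty)"

text \<open>Once a stage of the Kleene chain converges, all later stages equal it; otherwise the
  limit is the union of the trajectories. If no stage is defined at t, the SOME below picks an
  arbitrary stage, which is undefined at t as well.\<close>
definition dagger_lim :: "('x \<Rightarrow> ('s, 'y + 'x) H) \<Rightarrow> 'x \<Rightarrow> ('s, 'y) H" where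
  "dagger_lim f x =
    (if \<exists>n. is_Conv (dagger_approx f n x)
     then dagger_approx f (SOME n. is_Conv (dagger_approx f n x)) x
     else Div (\<lambda>t. traj (dagger_approx f (SOME n. traj (dagger_approx f n x) t \<noteq> None) x) t))"

lemma dagger_approx_0 [simp]: "dagger_approx f 0 x = Div Map.empty"
  by (simp add: dagger_approx_def)

lemma dagger_approx_Suc: "dagger_approx f (Suc n) = dagger_fun f (dagger_approx f n)"
  by (simp add: dagger_approx_def)

lemma dagger_fun_mono: "(\<And>x. le_H (g x) (g' x)) \<Longrightarrow> le_H (dagger_fun f g x) (dagger_fun f g' x)"
  unfolding dagger_fun_def by (rule kl_mono) (auto split: sum.split)

lemma dagger_approx_le_Suc: "le_H (dagger_approx f n x) (dagger_approx f (Suc n) x)"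
proof (induction n arbitrary: x)
  case 0
  then show ?case by (simp add: le_H_Div)
next
  case (Suc n)
  then show ?case by (simp only: dagger_approx_Suc) (rule dagger_fun_mono)
qed

lemma dagger_approx_mono: "n \<le> m \<Longrightarrow> le_H (dagger_approx f n x) (dagger_approx f m x)"
proof (induction m rule: dec_induct)
  case (step m)
  then show ?case using dagger_approx_le_Suc le_H_trans by metis
qed simp

lemma dagger_approx_Conv_stable:
  "is_Conv (dagger_approx f n x) \<Longrightarrow> n \<le> m \<Longrightarrow> dagger_approx f m x = dagger_approx f n x"
  using dagger_approx_mono[of n m f x] by (cases "dagger_approx f n x") (auto simp: le_H_Conv)

lemma traj_dagger_approx_agree:
  assumes "traj (dagger_approx f n x) t = Some a" "traj (dagger_approx f m x) t = Some b"
  shows "a = b"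
  using assms le_H_traj[OF dagger_approx_mono, of n m f x] le_H_traj[OF dagger_approx_mono, of m n f x]
  by (cases "n \<le> m") (auto simp: map_le_def dom_def)

lemma dagger_lim_ConvI: "is_Conv (dagger_approx f n x) \<Longrightarrow> dagger_lim f x = dagger_approx f n x"
  unfolding dagger_lim_def
  by (metis (mono_tags, lifting) dagger_approx_Conv_stable nle_le someI)

lemma dagger_lim_Conv:
  assumes "is_Conv (dagger_lim f x)"
  shows "\<exists>n. dagger_approx f n x = dagger_lim f x"
proof -
  have "\<exists>n. is_Conv (dagger_approx f n x)"
    using assms by (auto simp: dagger_lim_def split: if_splits)
  then show ?thesis using dagger_lim_ConvI by metis
qed

lemma dagger_approx_le_lim: "le_H (dagger_approx f n x) (dagger_lim f x)"
proof (cases "\<exists>k. is_Conv (dagger_approx f k x)")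
  case True
  then obtain k where k: "is_Conv (dagger_approx f k x)" by blast
  have "dagger_approx f (max n k) x = dagger_approx f k x"
    by (rule dagger_approx_Conv_stable[OF k]) simp
  also have "\<dots> = dagger_lim f x"
    by (rule dagger_lim_ConvI[OF k, symmetric])
  finally show ?thesis using dagger_approx_mono[of n "max n k" f x] by simp
next
  case False
  then have "\<not> is_Conv (dagger_approx f n x)" by blast
  then obtain e where e: "dagger_approx f n x = Div e"
    by (cases "dagger_approx f n x") auto
  have "e \<subseteq>\<^sub>m traj (dagger_lim f x)"
  proof (rule map_leI)
    fix t a
    assume a: "e t = Some a"
    let ?k = "SOME k. traj (dagger_approx f k x) t \<noteq> None"
    have "traj (dagger_approx f n x) t \<noteq> None" using a e by simp
    then have "traj (dagger_approx f ?k x) t \<noteq> None"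
      by (rule someI[where P = "\<lambda>k. traj (dagger_approx f k x) t \<noteq> None"])
    then obtain b where b: "traj (dagger_approx f ?k x) t = Some b" by blast
    have "a = b" by (rule traj_dagger_approx_agree[of f n x t a ?k b]) (use a e b in simp_all)
    then show "traj (dagger_lim f x) t = Some a" using False b by (simp add: dagger_lim_def)
  qed
  then show ?thesis using e by (simp add: le_H_Div)
qed

lemma traj_dagger_lim:
  "traj (dagger_lim f x) t = Some s \<longleftrightarrow> (\<exists>n. traj (dagger_approx f n x) t = Some s)"
proof
  assume lim: "traj (dagger_lim f x) t = Some s"
  show "\<exists>n. traj (dagger_approx f n x) t = Some s"
  proof (cases "\<exists>k. is_Conv (dagger_approx f k x)")
    case True
    then obtain k where "is_Conv (dagger_approx f k x)" by blast
    then show ?thesis using lim dagger_lim_ConvI[of f k x] by auto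
  next
    case False
    then show ?thesis using lim by (auto simp: dagger_lim_def)
  qed
next
  assume "\<exists>n. traj (dagger_approx f n x) t = Some s"
  then obtain n where "traj (dagger_approx f n x) t = Some s" by blast
  then show "traj (dagger_lim f x) t = Some s"
    by (rule map_le_SomeD[OF le_H_traj[OF dagger_approx_le_lim]])
qed

lemma dagger_lim_least_ub:
  assumes ub: "\<And>n. le_H (dagger_approx f n x) b"
  shows "le_H (dagger_lim f x) b"
proof (cases "dagger_lim f x")
  case (Conv d e y)
  then have "is_Conv (dagger_lim f x)" by simp
  from dagger_lim_Conv[OF this] obtain n where "dagger_approx f n x = dagger_lim f x" ..
  with ub[of n] show ?thesis by simp
next
  case (Div e)
  have "e \<subseteq>\<^sub>m traj b"
  proof (rule map_leI)
    fix t s assume "e t = Some s"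
    then obtain n where "traj (dagger_approx f n x) t = Some s"
      using Div traj_dagger_lim[of f x t s] by auto
    then show "traj b t = Some s" by (rule map_le_SomeD[OF le_H_traj[OF ub]])
  qed
  then show ?thesis using Div by (simp add: le_H_Div)
qed

lemma le_dagger_limI:
  assumes "\<And>d e y. a = Conv d e y \<Longrightarrow> \<exists>n. dagger_approx f n x = a"
    and "\<And>t s. traj a t = Some s \<Longrightarrow> \<exists>n. traj (dagger_approx f n x) t = Some s"
  shows "le_H a (dagger_lim f x)"
proof (cases a)
  case (Conv d e y)
  then show ?thesis using assms(1) dagger_approx_le_lim by metis
next
  case (Div e)
  have "e \<subseteq>\<^sub>m traj (dagger_lim f x)"
    by (rule map_leI) (use Div assms(2) in \<open>simp add: traj_dagger_lim\<close>)
  then show ?thesis using Div by (simp add: le_H_Div)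
qed

lemma dagger_fun_cases:
  obtains "\<And>g. dagger_fun f g x = dagger_approx f 1 x"
    | d e y where "\<And>g. dagger_fun f g x = prepend d e (g y)"
proof (cases "f x")
  case (Conv d e z)
  then show ?thesis using that
    by (cases z) (auto simp: dagger_fun_def dagger_approx_Suc)
qed (use that in \<open>simp add: dagger_fun_def dagger_approx_Suc\<close>)

text \<open>Continuity of the functional: one unfolding of the limit is reached by a finite stage.\<close>
lemma dagger_fun_lim_le: "le_H (dagger_fun f (dagger_lim f) x) (dagger_lim f x)"
proof (cases rule: dagger_fun_cases[where f = f and x = x])
  case 1
  then show ?thesis by (simp add: dagger_approx_le_lim)
next
  case (2 d e y)
  have approx: "dagger_approx f (Suc n) x = prepend d e (dagger_approx f n y)" for n
    by (simp add: dagger_approx_Suc 2)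
  show ?thesis
  proof (rule le_dagger_limI)
    fix d' e' y'
    assume "dagger_fun f (dagger_lim f) x = Conv d' e' y'"
    then have "is_Conv (dagger_lim f y)" by (cases "dagger_lim f y") (simp_all add: 2)
    from dagger_lim_Conv[OF this] obtain n where "dagger_approx f n y = dagger_lim f y" ..
    then show "\<exists>n. dagger_approx f n x = dagger_fun f (dagger_lim f) x"
      by (metis 2 approx)
  next
    fix t s
    assume "traj (dagger_fun f (dagger_lim f) x) t = Some s"
    then have "cat d e (traj (dagger_lim f y)) t = Some s" by (simp add: 2 traj_prepend)
    then obtain n where "cat d e (traj (dagger_approx f n y)) t = Some s"
      by (cases "t < d") (auto simp: cat_def traj_dagger_lim)
    then show "\<exists>n. traj (dagger_approx f n x) t = Some s"
      by (metis approx traj_prepend)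
  qed
qed

lemma dagger_lim_fixpoint: "dagger_lim f = dagger_fun f (dagger_lim f)"
proof
  fix x
  have "le_H (dagger_approx f n x) (dagger_fun f (dagger_lim f) x)" for n
  proof (cases n)
    case (Suc m)
    then show ?thesis by (simp add: dagger_approx_Suc dagger_fun_mono dagger_approx_le_lim)
  qed (simp add: le_H_Div)
  then show "dagger_lim f x = dagger_fun f (dagger_lim f) x"
    by (rule le_H_antisym[OF dagger_lim_least_ub dagger_fun_lim_le])
qed

lemma dagger_lim_least:
  assumes fixpoint: "g = dagger_fun f g"
  shows "le_H (dagger_lim f x) (g x)"
proof (rule dagger_lim_least_ub)
  show "le_H (dagger_approx f n x) (g x)" for n
  proof (induction n arbitrary: x)
    case (Suc n)
    have "le_H (dagger_fun f (dagger_approx f n) x) (dagger_fun f g x)"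
      using Suc.IH by (rule dagger_fun_mono)
    then show ?case by (simp only: dagger_approx_Suc flip: fun_cong[OF fixpoint])
  qed (simp add: le_H_Div)
qed

lemma dagger_eq_lim: "dagger f = dagger_lim f"
  unfolding dagger_def dagger_fun_def[symmetric]
proof (rule the_equality)
  show "dagger_lim f = dagger_fun f (dagger_lim f) \<and>
      (\<forall>g. g = dagger_fun f g \<longrightarrow> (\<forall>x. le_H (dagger_lim f x) (g x)))"
  proof (intro conjI allI impI)
    show "dagger_lim f = dagger_fun f (dagger_lim f)" by (rule dagger_lim_fixpoint)
    show "le_H (dagger_lim f x) (g x)" if "g = dagger_fun f g" for g x
      using that by (rule dagger_lim_least)
  qed
next
  fix g
  assume g: "g = dagger_fun f g \<and> (\<forall>g'. g' = dagger_fun f g' \<longrightarrow> (\<forall>x. le_H (g x) (g' x)))"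
  show "g = dagger_lim f"
  proof
    fix x
    show "g x = dagger_lim f x"
      using g[THEN conjunct2, rule_format, OF dagger_lim_fixpoint, of x]
        dagger_lim_least[OF g[THEN conjunct1], of x] by (rule le_H_antisym)
  qed
qed

definition loop_body :: "'v::finite bexp \<Rightarrow> 'v prog \<Rightarrow> real^'v \<Rightarrow> (real^'v, real^'v + real^'v) H" where
  "loop_body b p = (\<lambda>\<sigma>. if bval b \<sigma> then hmap Inr (sem p \<sigma>) else eta (Inl \<sigma>))"

lemma sem_While_dagger_lim: "sem (While b p) = dagger_lim (loop_body b p)"
  by (simp add: fun_eq_iff loop_body_def dagger_eq_lim)

lemma kl_hmap_Inr: "kl (case_sum eta g) (hmap Inr a) = kl g a"
  by (cases a) (auto simp: hmap_def eta_def prepend_cat_same)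

lemma dagger_fun_loop_body:
  "dagger_fun (loop_body b p) g \<sigma> = (if bval b \<sigma> then kl g (sem p \<sigma>) else eta \<sigma>)"
  by (simp add: dagger_fun_def loop_body_def kl_hmap_Inr eta_def cat_def fun_eq_iff)

lemma sem_While_unfold:
  "sem (While b p) \<sigma> = (if bval b \<sigma> then sem (Seq p (While b p)) \<sigma> else eta \<sigma>)"
  using dagger_lim_fixpoint[of "loop_body b p"]
  by (simp add: sem_While_dagger_lim dagger_fun_loop_body fun_eq_iff)

declare sem.simps(5) [simp del]

section \<open>Well-formed denotations\<close>

definition init_ivl :: "ereal \<Rightarrow> real set" where
  "init_ivl D = {x. 0 \<le> x \<and> ereal x < D}"

lemma init_ivl_ereal [simp]: "init_ivl (ereal d) = {0..<d}"
  by (auto simp: init_ivl_def)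

lemma UN_init_ivl: "(\<Union>n. init_ivl (D n)) = init_ivl (SUP n. D n)"
  by (auto simp: init_ivl_def less_SUP_iff)

lemma dom_cat_init_ivl:
  assumes "0 \<le> d" "dom e = {0..<d}" "dom e' = init_ivl D" "0 \<le> D"
  shows "dom (cat d e e') = init_ivl (ereal d + D)"
proof -
  have "dom (cat d e e') = {t. (t < d \<and> t \<in> dom e) \<or> (d \<le> t \<and> t - d \<in> dom e')}"
    by (auto simp: cat_def dom_def)
  also have "\<dots> = init_ivl (ereal d + D)"
    using assms by (cases D) (auto simp: init_ivl_def)
  finally show ?thesis .
qed

definition wf_H :: "('s, 'a) H \<Rightarrow> bool" where
  "wf_H a = (case a of
       Conv d e y \<Rightarrow> 0 \<le> d \<and> dom e = {0..<d}
     | Div e \<Rightarrow> (\<exists>D\<ge>0. dom e = init_ivl D))"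

lemma wf_H_simps [simp]:
  "wf_H (Conv d e y) \<longleftrightarrow> 0 \<le> d \<and> dom e = {0..<d}"
  "wf_H (Div e) \<longleftrightarrow> (\<exists>D\<ge>0. dom e = init_ivl D)"
  by (simp_all add: wf_H_def)

lemma wf_H_eta [simp]: "wf_H (eta x)"
  by (simp add: eta_def)

lemma wf_H_prepend:
  assumes "0 \<le> d" "dom e = {0..<d}" "wf_H a"
  shows "wf_H (prepend d e a)"
proof (cases a)
  case (Conv d' e' y)
  then have "dom (cat d e e') = init_ivl (ereal d + ereal d')"
    using assms by (intro dom_cat_init_ivl) auto
  then show ?thesis using Conv assms by simp
next
  case (Div e')
  then obtain D where "0 \<le> D" "dom e' = init_ivl D" using assms by auto
  then have "dom (cat d e e') = init_ivl (ereal d + D)"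
    using assms by (intro dom_cat_init_ivl) auto
  then show ?thesis using Div \<open>0 \<le> D\<close> \<open>0 \<le> d\<close> by (auto intro!: exI[of _ "ereal d + D"])
qed

lemma wf_H_kl: "wf_H a \<Longrightarrow> (\<And>y. wf_H (f y)) \<Longrightarrow> wf_H (kl f a)"
  by (cases a) (auto intro: wf_H_prepend)

lemma wf_H_dagger_approx:
  assumes "\<And>x. wf_H (f x)"
  shows "wf_H (dagger_approx f n x)"
proof (induction n arbitrary: x)
  case 0
  then show ?case by (auto simp: init_ivl_def intro: exI[of _ 0])
next
  case (Suc n)
  then show ?case
    by (auto simp: dagger_approx_Suc dagger_fun_def assms intro!: wf_H_kl split: sum.split)
qed

lemma wf_H_dagger_lim:
  assumes "\<And>x. wf_H (f x)"
  shows "wf_H (dagger_lim f x)"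
proof -
  note approx = wf_H_dagger_approx[of f, OF assms]
  show ?thesis
  proof (cases "dagger_lim f x")
    case (Conv d e y)
    with dagger_lim_Conv[of f x] obtain n where "dagger_approx f n x = dagger_lim f x" by auto
    then show ?thesis using approx[where n = n and x = x] by simp
  next
    case (Div e)
    then have "\<not> is_Conv (dagger_approx f n x)" for n
      using dagger_lim_ConvI by fastforce
    then have "\<forall>n. \<exists>D\<ge>0. dom (traj (dagger_approx f n x)) = init_ivl D"
      using approx by (metis not_is_Conv_eq_Div wf_H_simps(2))
    then obtain D where D: "0 \<le> D n" "dom (traj (dagger_approx f n x)) = init_ivl (D n)" for n
      by metis
    have "dom e = (\<Union>n. dom (traj (dagger_approx f n x)))"
      using Div traj_dagger_lim[of f x] by (auto simp: dom_def)
    also have "\<dots> = init_ivl (SUP n. D n)"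
      by (simp add: D UN_init_ivl)
    finally have "dom e = init_ivl (SUP n. D n)" .
    moreover have "0 \<le> (SUP n. D n)" using D(1)[of 0] by (rule SUP_upper2[OF UNIV_I])
    ultimately show ?thesis using Div by auto
  qed
qed

lemma wf_H_sem: "wf_H (sem p \<sigma>)"
proof (induction p arbitrary: \<sigma>)
  case (ODE u s)
  then show ?case by (auto simp: dur_def dom_def split: if_splits)
next
  case (Seq p q)
  then show ?case by (simp add: wf_H_kl)
next
  case (While b p)
  then show ?case
    by (auto simp: sem_While_dagger_lim loop_body_def hmap_def intro!: wf_H_dagger_lim wf_H_kl)
qed simp_all

lemma kl_prepend: "wf_H a \<Longrightarrow> kl f (prepend d e a) = prepend d e (kl f a)"
  by (cases a) (auto simp: prepend_prepend)

lemma traj_kl_extends: "wf_H a \<Longrightarrow> traj a \<subseteq>\<^sub>m traj (kl f a)"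
  by (cases a) (auto simp: traj_prepend cat_def map_le_def)

section \<open>Soundness\<close>

lemma step_source_Prog: "step (c0, s) c \<Longrightarrow> \<exists>p. c0 = Prog p"
  by (auto elim: step.cases)

text \<open>What a configuration reached from (p, \<sigma>, t) says about sem p \<sigma>: an intermediate program
  at remaining time t - d means that sem p \<sigma> is its semantics delayed by d.\<close>
fun sem_agrees :: "'v::finite prog \<Rightarrow> real^'v \<Rightarrow> real \<Rightarrow> 'v cmd \<times> (real^'v) \<times> real \<Rightarrow> bool" where
  "sem_agrees p \<sigma> t (Prog p', \<sigma>', t') \<longleftrightarrow>
     (\<exists>d e. 0 \<le> d \<and> d \<le> t \<and> t' = t - d \<and> sem p \<sigma> = prepend d e (sem p' \<sigma>'))"
| "sem_agrees p \<sigma> t (Skip, \<sigma>', t') \<longleftrightarrow> 0 \<le> t' \<and> t' \<le> t \<and> (\<exists>e. sem p \<sigma> = Conv (t - t') e \<sigma>')"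
| "sem_agrees p \<sigma> t (Stop, \<sigma>', t') \<longleftrightarrow> t' = 0 \<and> traj (sem p \<sigma>) t = Some \<sigma>'"

lemma step_sem_agrees: "step (Prog p, \<sigma>, t) c \<Longrightarrow> 0 \<le> t \<Longrightarrow> sem_agrees p \<sigma> t c"
proof (induction "(Prog p, \<sigma>, t)" c arbitrary: p \<sigma> t rule: step.induct)
  case (while_true b \<sigma> p t)
  then have "sem (While b p) \<sigma> = sem (Seq p (While b p)) \<sigma>" by (simp add: sem_While_unfold)
  then show ?case using while_true.prems by (auto intro: ex_prepend_0)
next
  case (while_false b \<sigma> p t)
  then show ?case by (simp add: sem_While_unfold eta_def)
next
  case (seq_stop p \<sigma> t \<sigma>' t' q)
  then have "t' = 0" "traj (sem p \<sigma>) t = Some \<sigma>'" by auto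
  then show ?case by (auto intro: map_le_SomeD[OF traj_kl_extends[OF wf_H_sem]])
next
  case (seq_skip p \<sigma> t \<sigma>' t' q)
  then obtain e where e: "sem p \<sigma> = Conv (t - t') e \<sigma>'" "0 \<le> t'" "t' \<le> t" by auto
  then show ?case by (auto intro!: exI[of _ "t - t'"] exI[of _ e])
next
  case (seq_prog p \<sigma> t p' \<sigma>' t' q)
  then obtain d e where "0 \<le> d" "d \<le> t" "t' = t - d" "sem p \<sigma> = prepend d e (sem p' \<sigma>')"
    by auto
  moreover have "sem (Seq p q) \<sigma> = prepend d e (sem (Seq p' q) \<sigma>')"
    using calculation(4) wf_H_sem[of p' \<sigma>'] by (simp add: kl_prepend)
  ultimately show ?case by auto
qed (auto simp: eta_def dur_def intro: ex_prepend_0)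

lemma sem_agrees_trans:
  assumes "sem_agrees p \<sigma> t (Prog p', \<sigma>', t')" "sem_agrees p' \<sigma>' t' c"
  shows "sem_agrees p \<sigma> t c"
proof -
  obtain d e where d: "0 \<le> d" "d \<le> t" "t' = t - d" "sem p \<sigma> = prepend d e (sem p' \<sigma>')"
    using assms(1) by auto
  obtain c0 \<sigma>'' t'' where c: "c = (c0, \<sigma>'', t'')" by (cases c)
  show ?thesis
  proof (cases c0)
    case (Prog p'')
    then obtain d' e' where
      "0 \<le> d'" "d' \<le> t'" "t'' = t' - d'" "sem p' \<sigma>' = prepend d' e' (sem p'' \<sigma>'')"
      using assms(2) c by auto
    then show ?thesis using c Prog d by (auto simp: prepend_prepend intro!: exI[of _ "d + d'"])
  next
    case Skip
    then obtain e' where "0 \<le> t''" "t'' \<le> t'" "sem p' \<sigma>' = Conv (t' - t'') e' \<sigma>''"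
      using assms(2) c by auto
    then show ?thesis using c Skip d by auto
  next
    case Stop
    then show ?thesis using assms(2) c d by (auto simp: traj_prepend cat_def)
  qed
qed

lemma steps_sem_agrees: "step\<^sup>+\<^sup>+ (Prog p, \<sigma>, t) c \<Longrightarrow> 0 \<le> t \<Longrightarrow> sem_agrees p \<sigma> t c"
proof (induction c rule: tranclp_induct)
  case (base c)
  then show ?case by (rule step_sem_agrees)
next
  case (step c c')
  obtain c0 \<sigma>' t' where c: "c = (c0, \<sigma>', t')" by (cases c)
  then obtain p' where p': "c0 = Prog p'"
    using step.hyps(2) step_source_Prog by blast
  have "sem_agrees p \<sigma> t c" using step by simp
  moreover have "0 \<le> t'" using calculation c p' by auto
  ultimately show ?case
    using sem_agrees_trans step_sem_agrees step.hyps(2) c p' by blast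
qed

lemma wf_H_traj_Some:
  assumes "wf_H a" "traj a t = Some s"
  shows "\<exists>D h. ereal t < D \<and> dom h = init_ivl D \<and> h t = Some s
           \<and> ((\<exists>y. D \<noteq> \<infinity> \<and> a = Conv (real_of_ereal D) h y) \<or> a = Div h)"
proof (cases a)
  case (Conv d e y)
  then have "t < d" using assms by (auto simp: dom_def)
  then show ?thesis using Conv assms by (intro exI[of _ "ereal d"] exI[of _ e]) auto
next
  case (Div e)
  then obtain D where "dom e = init_ivl D" using assms by auto
  moreover have "t \<in> dom e" using Div assms by auto
  ultimately show ?thesis using Div assms by (intro exI[of _ D] exI[of _ e]) (auto simp: init_ivl_def)
qed

section \<open>Completeness\<close>

fun seq_cfg :: "'v prog \<Rightarrow> 'v cmd \<times> (real^'v) \<times> real \<Rightarrow> 'v cmd \<times> (real^'v) \<times> real" where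
  "seq_cfg q (Prog p, s) = (Prog (Seq p q), s)"
| "seq_cfg q (Skip, s) = (Prog q, s)"
| "seq_cfg q (Stop, s) = (Stop, s)"

lemma step_seq_cfg:
  assumes "step (Prog p, s) c"
  shows "step (Prog (Seq p q), s) (seq_cfg q c)"
proof -
  obtain \<sigma> t where s: "s = (\<sigma>, t)" by (cases s)
  obtain c0 \<sigma>' t' where c: "c = (c0, \<sigma>', t')" by (cases c)
  show ?thesis using assms s c by (cases c0) (auto intro: step.intros)
qed

lemma steps_seq_cfg: "step\<^sup>+\<^sup>+ (Prog p, s) c \<Longrightarrow> step\<^sup>+\<^sup>+ (Prog (Seq p q), s) (seq_cfg q c)"
proof (induction c rule: tranclp_induct)
  case (base c)
  then show ?case by (simp add: step_seq_cfg tranclp.r_into_trancl)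
next
  case (step c c')
  obtain p' s' where c: "c = (Prog p', s')"
    using step.hyps(2) step_source_Prog by (metis prod.collapse)
  have "step (Prog (Seq p' q), s') (seq_cfg q c')" using step.hyps(2) c by (simp add: step_seq_cfg)
  then show ?case using step.IH c by (simp add: tranclp.trancl_into_trancl)
qed

lemma steps_Seq_Skip:
  "step\<^sup>+\<^sup>+ (Prog p, \<sigma>, t) (Skip, \<sigma>', t') \<Longrightarrow> step\<^sup>+\<^sup>+ (Prog (Seq p q), \<sigma>, t) (Prog q, \<sigma>', t')"
  using steps_seq_cfg[of p "(\<sigma>, t)" "(Skip, \<sigma>', t')" q] by simp

lemma steps_Seq_Stop:
  "step\<^sup>+\<^sup>+ (Prog p, \<sigma>, t) (Stop, \<sigma>', t') \<Longrightarrow> step\<^sup>+\<^sup>+ (Prog (Seq p q), \<sigma>, t) (Stop, \<sigma>', t')"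
  using steps_seq_cfg[of p "(\<sigma>, t)" "(Stop, \<sigma>', t')" q] by simp

definition realizes_skip :: "'v::finite prog \<Rightarrow> (real^'v \<Rightarrow> (real^'v, real^'v) H) \<Rightarrow> bool" where
  "realizes_skip p g \<longleftrightarrow> (\<forall>\<sigma> t d e \<sigma>'. g \<sigma> = Conv d e \<sigma>' \<longrightarrow> 0 \<le> t \<longrightarrow> d \<le> t \<longrightarrow>
     step\<^sup>+\<^sup>+ (Prog p, \<sigma>, t) (Skip, \<sigma>', t - d))"

definition realizes_stop :: "'v::finite prog \<Rightarrow> (real^'v \<Rightarrow> (real^'v, real^'v) H) \<Rightarrow> bool" where
  "realizes_stop p g \<longleftrightarrow> (\<forall>\<sigma> t \<sigma>'. 0 \<le> t \<longrightarrow> traj (g \<sigma>) t = Some \<sigma>' \<longrightarrow>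
     step\<^sup>+\<^sup>+ (Prog p, \<sigma>, t) (Stop, \<sigma>', 0))"

lemma realizes_skipD:
  "realizes_skip p g \<Longrightarrow> g \<sigma> = Conv d e \<sigma>' \<Longrightarrow> 0 \<le> t \<Longrightarrow> d \<le> t \<Longrightarrow>
     step\<^sup>+\<^sup>+ (Prog p, \<sigma>, t) (Skip, \<sigma>', t - d)"
  by (simp add: realizes_skip_def)

lemma realizes_stopD:
  "realizes_stop p g \<Longrightarrow> 0 \<le> t \<Longrightarrow> traj (g \<sigma>) t = Some \<sigma>' \<Longrightarrow>
     step\<^sup>+\<^sup>+ (Prog p, \<sigma>, t) (Stop, \<sigma>', 0)"
  by (simp add: realizes_stop_def)

lemma realizes_skip_Seq:
  assumes p: "realizes_skip p (sem p)" and q: "realizes_skip q g" and wf: "\<And>\<sigma>. wf_H (g \<sigma>)"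
  shows "realizes_skip (Seq p q) (\<lambda>\<sigma>. kl g (sem p \<sigma>))"
  unfolding realizes_skip_def
proof (intro allI impI)
  fix \<sigma> t d e \<sigma>'
  assume conv: "kl g (sem p \<sigma>) = Conv d e \<sigma>'" and t: "0 \<le> t" "d \<le> t"
  obtain d1 e1 \<sigma>1 where s1: "sem p \<sigma> = Conv d1 e1 \<sigma>1"
    using conv by (cases "sem p \<sigma>") auto
  obtain d2 e2 where s2: "g \<sigma>1 = Conv d2 e2 \<sigma>'" "d = d1 + d2"
    using conv s1 by (cases "g \<sigma>1") auto
  have "0 \<le> d2" using wf[of \<sigma>1] s2 by simp
  then have "step\<^sup>+\<^sup>+ (Prog p, \<sigma>, t) (Skip, \<sigma>1, t - d1)"
    using t s2 by (intro realizes_skipD[OF p s1]) auto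
  moreover have "step\<^sup>+\<^sup>+ (Prog q, \<sigma>1, t - d1) (Skip, \<sigma>', t - d1 - d2)"
    using t s2 \<open>0 \<le> d2\<close> by (intro realizes_skipD[OF q s2(1)]) auto
  ultimately show "step\<^sup>+\<^sup>+ (Prog (Seq p q), \<sigma>, t) (Skip, \<sigma>', t - d)"
    using s2(2) by (auto dest: steps_Seq_Skip intro: tranclp_trans simp: algebra_simps)
qed

lemma realizes_stop_Seq:
  assumes p: "realizes_skip p (sem p)" "realizes_stop p (sem p)" and q: "realizes_stop q g"
  shows "realizes_stop (Seq p q) (\<lambda>\<sigma>. kl g (sem p \<sigma>))"
  unfolding realizes_stop_def
proof (intro allI impI)
  fix \<sigma> t \<sigma>'
  assume t: "0 \<le> t" and traj: "traj (kl g (sem p \<sigma>)) t = Some \<sigma>'"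
  show "step\<^sup>+\<^sup>+ (Prog (Seq p q), \<sigma>, t) (Stop, \<sigma>', 0)"
  proof (cases "\<exists>d1 e1 \<sigma>1. sem p \<sigma> = Conv d1 e1 \<sigma>1 \<and> d1 \<le> t")
    case True
    then obtain d1 e1 \<sigma>1 where s1: "sem p \<sigma> = Conv d1 e1 \<sigma>1" "d1 \<le> t" by blast
    then have "step\<^sup>+\<^sup>+ (Prog p, \<sigma>, t) (Skip, \<sigma>1, t - d1)"
      using t by (intro realizes_skipD[OF p(1) s1(1)])
    moreover have "step\<^sup>+\<^sup>+ (Prog q, \<sigma>1, t - d1) (Stop, \<sigma>', 0)"
      using traj s1 by (intro realizes_stopD[OF q]) (auto simp: traj_prepend cat_def)
    ultimately show ?thesis by (auto dest: steps_Seq_Skip intro: tranclp_trans)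
  next
    case False
    then have "traj (sem p \<sigma>) t = Some \<sigma>'"
      using traj by (cases "sem p \<sigma>") (auto simp: traj_prepend cat_def)
    then show ?thesis by (intro steps_Seq_Stop realizes_stopD[OF p(2) t])
  qed
qed

lemma realizes_While:
  assumes "realizes_skip (Seq p (While b p)) g" "realizes_stop (Seq p (While b p)) g"
  shows "realizes_skip (While b p) (\<lambda>\<sigma>. if bval b \<sigma> then g \<sigma> else eta \<sigma>)"
    and "realizes_stop (While b p) (\<lambda>\<sigma>. if bval b \<sigma> then g \<sigma> else eta \<sigma>)"
proof -
  have enter: "step\<^sup>+\<^sup>+ (Prog (While b p), \<sigma>, t) c"
    if "bval b \<sigma>" "step\<^sup>+\<^sup>+ (Prog (Seq p (While b p)), \<sigma>, t) c" for \<sigma> t c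
    using that by (blast intro: tranclp_into_tranclp2 step.while_true)
  show "realizes_skip (While b p) (\<lambda>\<sigma>. if bval b \<sigma> then g \<sigma> else eta \<sigma>)"
    using assms(1) enter
    by (auto simp: realizes_skip_def eta_def intro: step.while_false)
  show "realizes_stop (While b p) (\<lambda>\<sigma>. if bval b \<sigma> then g \<sigma> else eta \<sigma>)"
    using assms(2) enter by (auto simp: realizes_stop_def eta_def)
qed

lemma realizes_dagger_lim:
  assumes "\<And>n. realizes_skip p (dagger_approx f n)" "\<And>n. realizes_stop p (dagger_approx f n)"
  shows "realizes_skip p (dagger_lim f)" "realizes_stop p (dagger_lim f)"
proof -
  show "realizes_skip p (dagger_lim f)"
    unfolding realizes_skip_def
  proof (intro allI impI)
    fix \<sigma> t d e \<sigma>'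
    assume conv: "dagger_lim f \<sigma> = Conv d e \<sigma>'" and "0 \<le> t" "d \<le> t"
    from conv dagger_lim_Conv[of f \<sigma>] obtain n where "dagger_approx f n \<sigma> = Conv d e \<sigma>'" by auto
    then show "step\<^sup>+\<^sup>+ (Prog p, \<sigma>, t) (Skip, \<sigma>', t - d)"
      using \<open>0 \<le> t\<close> \<open>d \<le> t\<close> by (rule realizes_skipD[OF assms(1)])
  qed
  show "realizes_stop p (dagger_lim f)"
    using assms(2) by (auto simp: realizes_stop_def traj_dagger_lim)
qed

lemma dagger_approx_loop_body_Suc:
  "dagger_approx (loop_body b p) (Suc n) =
     (\<lambda>\<sigma>. if bval b \<sigma> then kl (dagger_approx (loop_body b p) n) (sem p \<sigma>) else eta \<sigma>)"
  by (simp add: dagger_approx_Suc dagger_fun_loop_body fun_eq_iff)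

lemma realizes_While_dagger_approx:
  assumes "realizes_skip p (sem p)" "realizes_stop p (sem p)"
  shows "realizes_skip (While b p) (dagger_approx (loop_body b p) n)
       \<and> realizes_stop (While b p) (dagger_approx (loop_body b p) n)"
proof (induction n)
  case 0
  then show ?case by (simp add: realizes_skip_def realizes_stop_def)
next
  case (Suc n)
  let ?approx = "dagger_approx (loop_body b p)"
  have "wf_H (loop_body b p \<sigma>)" for \<sigma>
    by (simp add: loop_body_def hmap_def wf_H_kl wf_H_sem)
  then have "wf_H (?approx n \<sigma>)" for \<sigma>
    by (rule wf_H_dagger_approx)
  then have "realizes_skip (Seq p (While b p)) (\<lambda>\<sigma>. kl (?approx n) (sem p \<sigma>))"
    using assms Suc by (intro realizes_skip_Seq) auto
  moreover have "realizes_stop (Seq p (While b p)) (\<lambda>\<sigma>. kl (?approx n) (sem p \<sigma>))"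
    using assms Suc by (intro realizes_stop_Seq) auto
  ultimately show ?case by (simp add: dagger_approx_loop_body_Suc realizes_While)
qed

lemma realizes_sem: "realizes_skip p (sem p) \<and> realizes_stop p (sem p)"
proof (induction p)
  case (Assign x s)
  then show ?case
    by (auto simp: realizes_skip_def realizes_stop_def eta_def intro: step.assign)
next
  case (ODE u s)
  then show ?case
    by (auto simp: realizes_skip_def realizes_stop_def intro: step.intros split: if_splits)
next
  case (Seq p q)
  have "sem (Seq p q) = (\<lambda>\<sigma>. kl (sem q) (sem p \<sigma>))" by (simp add: fun_eq_iff)
  moreover have "realizes_skip (Seq p q) (\<lambda>\<sigma>. kl (sem q) (sem p \<sigma>))"
    using Seq by (intro realizes_skip_Seq wf_H_sem) auto
  moreover have "realizes_stop (Seq p q) (\<lambda>\<sigma>. kl (sem q) (sem p \<sigma>))"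
    using Seq by (intro realizes_stop_Seq) auto
  ultimately show ?case by simp
next
  case (If b p q)
  then show ?case
    by (auto simp: realizes_skip_def realizes_stop_def intro: tranclp_into_tranclp2 step.intros)
next
  case (While b p)
  then show ?case
    by (simp add: sem_While_dagger_lim realizes_dagger_lim realizes_While_dagger_approx)
qed

theorem theorem5:
  fixes p :: "'v::finite prog" and \<sigma> \<sigma>' :: "real^'v" and t :: real
  assumes "t \<ge> 0"
  shows "(step\<^sup>+\<^sup>+ (Prog p, \<sigma>, t) (Skip, \<sigma>', 0) \<longleftrightarrow>
            (\<exists>h. dom h = {0..<t} \<and> sem p \<sigma> = Conv t h \<sigma>'))
       \<and> (step\<^sup>+\<^sup>+ (Prog p, \<sigma>, t) (Stop, \<sigma>', 0) \<longleftrightarrow>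
            (\<exists>t'::ereal. \<exists>h. t' > ereal t \<and> dom h = {x. 0 \<le> x \<and> ereal x < t'} \<and> h t = Some \<sigma>'
               \<and> ((\<exists>\<sigma>''. t' \<noteq> \<infinity> \<and> sem p \<sigma> = Conv (real_of_ereal t') h \<sigma>'') \<or> sem p \<sigma> = Div h)))"
proof (intro conjI iffI)
  assume "step\<^sup>+\<^sup>+ (Prog p, \<sigma>, t) (Skip, \<sigma>', 0)"
  then have "sem_agrees p \<sigma> t (Skip, \<sigma>', 0)" using assms by (rule steps_sem_agrees)
  then obtain h where "sem p \<sigma> = Conv t h \<sigma>'" by auto
  then show "\<exists>h. dom h = {0..<t} \<and> sem p \<sigma> = Conv t h \<sigma>'" using wf_H_sem[of p \<sigma>] by auto
next
  assume "\<exists>h. dom h = {0..<t} \<and> sem p \<sigma> = Conv t h \<sigma>'"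
  then obtain h where "sem p \<sigma> = Conv t h \<sigma>'" by blast
  then have "step\<^sup>+\<^sup>+ (Prog p, \<sigma>, t) (Skip, \<sigma>', t - t)"
    using assms by (intro realizes_skipD[OF realizes_sem[THEN conjunct1]]) auto
  then show "step\<^sup>+\<^sup>+ (Prog p, \<sigma>, t) (Skip, \<sigma>', 0)" by simp
next
  assume "step\<^sup>+\<^sup>+ (Prog p, \<sigma>, t) (Stop, \<sigma>', 0)"
  then have "sem_agrees p \<sigma> t (Stop, \<sigma>', 0)" using assms by (rule steps_sem_agrees)
  then have "traj (sem p \<sigma>) t = Some \<sigma>'" by simp
  with wf_H_sem show "\<exists>t'::ereal. \<exists>h. t' > ereal t \<and> dom h = {x. 0 \<le> x \<and> ereal x < t'}
      \<and> h t = Some \<sigma>' \<and> ((\<exists>\<sigma>''. t' \<noteq> \<infinity> \<and> sem p \<sigma> = Conv (real_of_ereal t') h \<sigma>'') \<or> sem p \<sigma> = Div h)"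
    unfolding init_ivl_def[symmetric] by (rule wf_H_traj_Some)
next
  assume "\<exists>t'::ereal. \<exists>h. t' > ereal t \<and> dom h = {x. 0 \<le> x \<and> ereal x < t'} \<and> h t = Some \<sigma>'
      \<and> ((\<exists>\<sigma>''. t' \<noteq> \<infinity> \<and> sem p \<sigma> = Conv (real_of_ereal t') h \<sigma>'') \<or> sem p \<sigma> = Div h)"
  then have "traj (sem p \<sigma>) t = Some \<sigma>'" by auto
  then show "step\<^sup>+\<^sup>+ (Prog p, \<sigma>, t) (Stop, \<sigma>', 0)"
    by (rule realizes_stopD[OF realizes_sem[THEN conjunct2] assms])
qed

end
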